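(* Let $l$ be a positive integer, let $G$ be an arbitrary graph and let $H$ be an $l$-degenerate graph. If $l\in\{1,2\}$, then $G+_S H$ is $2$-degenerate; if $l\ge 3$, then $G+_S H$ is $l$-degenerate.
   Context: A graph is $k$-degenerate if its vertices can be successively deleted so that each deleted vertex has degree at most $k$ (in the remaining graph) at the time of deletion. The subdivision graph $S(G)$ is obtained from $G$ by inserting one new vertex into each edge (each edge replaced by a path of length 2); its vertex set is identified with $V(G)\cup E(G)$. The $S$-sum $G+_S H$ has vertex set $(V(G)\cup E(G))\times V(H)$, and $(u_1,u_2)$, $(v_1,v_2)$ are adjacent iff either [$u_1=v_1\in V(G)$ and $u_2v_2\in E(H)$] or [$u_2=v_2$ and $u_1v_1\in E(S(G))$]. *)

theory Defs
  imports Main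
begin

definition simple_graph :: "'a set \<Rightarrow> 'a set set \<Rightarrow> bool" where
  "simple_graph V E \<longleftrightarrow> finite V \<and>
     (\<forall>e\<in>E. \<exists>u v. e = {u, v} \<and> u \<noteq> v \<and> u \<in> V \<and> v \<in> V)"

definition deg_in :: "'a set set \<Rightarrow> 'a set \<Rightarrow> 'a \<Rightarrow> nat" where
  "deg_in E W v = card {u \<in> W. {u, v} \<in> E}"

definition degenerate :: "'a set \<Rightarrow> 'a set set \<Rightarrow> nat \<Rightarrow> bool" where
  "degenerate V E k \<longleftrightarrow> (\<exists>xs. distinct xs \<and> set xs = V \<and>
     (\<forall>i < length xs. deg_in E (set (drop i xs)) (xs ! i) \<le> k))"

definition subdiv_vertices :: "'a set \<Rightarrow> 'a set set \<Rightarrow> ('a + 'a set) set" where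
  "subdiv_vertices V E = Inl ` V \<union> Inr ` E"

definition subdiv_edges :: "'a set set \<Rightarrow> ('a + 'a set) set set" where
  "subdiv_edges E = {{Inl v, Inr e} | v e. e \<in> E \<and> v \<in> e}"

definition S_sum_vertices :: "'a set \<Rightarrow> 'a set set \<Rightarrow> 'b set \<Rightarrow> (('a + 'a set) \<times> 'b) set" where
  "S_sum_vertices VG EG VH = subdiv_vertices VG EG \<times> VH"

definition S_sum_adj :: "'a set \<Rightarrow> 'a set set \<Rightarrow> 'b set set \<Rightarrow>
    ('a + 'a set) \<times> 'b \<Rightarrow> ('a + 'a set) \<times> 'b \<Rightarrow> bool" where
  "S_sum_adj VG EG EH x y \<longleftrightarrow>
     (fst x = fst y \<and> fst x \<in> Inl ` VG \<and> {snd x, snd y} \<in> EH) \<or>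
     (snd x = snd y \<and> {fst x, fst y} \<in> subdiv_edges EG)"

definition S_sum_edges :: "'a set \<Rightarrow> 'a set set \<Rightarrow> 'b set \<Rightarrow> 'b set set \<Rightarrow>
    (('a + 'a set) \<times> 'b) set set" where
  "S_sum_edges VG EG VH EH = {{x, y} | x y. x \<in> S_sum_vertices VG EG VH \<and>
      y \<in> S_sum_vertices VG EG VH \<and> S_sum_adj VG EG EH x y}"

end

theory Submission
  imports Defs
begin

text \<open>Delete the vertices of the form (e, h) with e an edge of G first: each has at most the
  two neighbours (u, h) and (v, h), where e = {u, v}. What remains is a disjoint union of
  copies of H, one for each vertex of G, and these are deleted copy by copy following a
  degeneracy ordering of H. This gives the bound max 2 l.\<close>

definition degeneracy_order :: "'a set set \<Rightarrow> nat \<Rightarrow> 'a list \<Rightarrow> bool" where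
  "degeneracy_order E k xs \<longleftrightarrow> (\<forall>i < length xs. deg_in E (set (drop i xs)) (xs ! i) \<le> k)"

lemma degenerate_iff_degeneracy_order:
  "degenerate V E k \<longleftrightarrow> (\<exists>xs. distinct xs \<and> set xs = V \<and> degeneracy_order E k xs)"
  by (simp add: degenerate_def degeneracy_order_def)

lemma degeneracy_order_Nil [simp]: "degeneracy_order E k []"
  by (simp add: degeneracy_order_def)

lemma degeneracy_order_Cons [simp]:
  "degeneracy_order E k (x # xs) \<longleftrightarrow> deg_in E (set (x # xs)) x \<le> k \<and> degeneracy_order E k xs"
  unfolding degeneracy_order_def by (auto simp: less_Suc_eq_0_disj)

lemma degeneracy_order_mono: "degeneracy_order E k xs \<Longrightarrow> k \<le> k' \<Longrightarrow> degeneracy_order E k' xs"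
  unfolding degeneracy_order_def by force

lemma deg_in_Un_nonadjacent:
  assumes "\<forall>y\<in>B. {y, x} \<notin> E"
  shows "deg_in E (A \<union> B) x = deg_in E A x"
proof -
  have "{u \<in> A \<union> B. {u, x} \<in> E} = {u \<in> A. {u, x} \<in> E}" using assms by auto
  then show ?thesis by (simp add: deg_in_def)
qed

lemma degeneracy_order_append_low_degree:
  assumes "\<forall>x\<in>set xs. \<forall>W. deg_in E W x \<le> k" and "degeneracy_order E k ys"
  shows "degeneracy_order E k (xs @ ys)"
  using assms by (induction xs) auto

lemma degeneracy_order_append_nonadjacent:
  assumes "degeneracy_order E k xs" and "degeneracy_order E k ys"
    and "\<forall>x\<in>set xs. \<forall>y\<in>set ys. {y, x} \<notin> E"
  shows "degeneracy_order E k (xs @ ys)"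
  using assms
proof (induction xs)
  case Nil
  then show ?case by simp
next
  case (Cons a xs)
  have "deg_in E (set (a # xs @ ys)) a = deg_in E (set (a # xs) \<union> set ys) a" by simp
  also have "\<dots> = deg_in E (set (a # xs)) a"
    using Cons.prems(3) by (intro deg_in_Un_nonadjacent) auto
  finally show ?case using Cons by auto
qed

lemma degeneracy_order_concat_nonadjacent:
  assumes "distinct ws" and "\<forall>w\<in>set ws. degeneracy_order E k (f w)"
    and "\<forall>w\<in>set ws. \<forall>w'\<in>set ws. w \<noteq> w' \<longrightarrow> (\<forall>x\<in>set (f w). \<forall>y\<in>set (f w'). {y, x} \<notin> E)"
  shows "degeneracy_order E k (concat (map f ws))"
  using assms
proof (induction ws)
  case Nil
  then show ?case by simp
next
  case (Cons w ws)
  have "\<forall>x\<in>set (f w). \<forall>y\<in>set (concat (map f ws)). {y, x} \<notin> E"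
    using Cons.prems(1,3) by fastforce
  moreover have "degeneracy_order E k (concat (map f ws))"
    using Cons by simp
  ultimately show ?case
    using Cons.prems(2) by (simp add: degeneracy_order_append_nonadjacent)
qed

lemma degeneracy_order_map:
  assumes "degeneracy_order E k zs"
    and "\<And>a b. a \<in> set zs \<Longrightarrow> b \<in> set zs \<Longrightarrow> {f a, f b} \<in> E' \<Longrightarrow> {a, b} \<in> E"
  shows "degeneracy_order E' k (map f zs)"
  using assms
proof (induction zs)
  case Nil
  then show ?case by simp
next
  case (Cons z zs)
  let ?N = "{a \<in> set (z # zs). {a, z} \<in> E}"
  have "{u \<in> set (map f (z # zs)). {u, f z} \<in> E'} \<subseteq> f ` ?N"
    using Cons.prems(2) by auto
  then have "deg_in E' (set (map f (z # zs))) (f z) \<le> card (f ` ?N)"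
    unfolding deg_in_def by (intro card_mono) auto
  also have "\<dots> \<le> deg_in E (set (z # zs)) z"
    unfolding deg_in_def by (rule card_image_le) auto
  also have "\<dots> \<le> k" using Cons.prems(1) by simp
  finally show ?case using Cons by simp
qed

lemma S_sum_adj_sym: "S_sum_adj VG EG EH x y \<Longrightarrow> S_sum_adj VG EG EH y x"
  unfolding S_sum_adj_def by (metis insert_commute)

lemma S_sum_edges_iff:
  "{x, y} \<in> S_sum_edges VG EG VH EH \<longleftrightarrow>
     x \<in> S_sum_vertices VG EG VH \<and> y \<in> S_sum_vertices VG EG VH \<and> S_sum_adj VG EG EH x y"
proof
  assume "{x, y} \<in> S_sum_edges VG EG VH EH"
  then obtain a b where "{x, y} = {a, b}" "a \<in> S_sum_vertices VG EG VH"
    "b \<in> S_sum_vertices VG EG VH" "S_sum_adj VG EG EH a b"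
    unfolding S_sum_edges_def by blast
  then show "x \<in> S_sum_vertices VG EG VH \<and> y \<in> S_sum_vertices VG EG VH \<and> S_sum_adj VG EG EH x y"
    by (auto simp: doubleton_eq_iff dest: S_sum_adj_sym)
qed (unfold S_sum_edges_def, blast)

lemma subdiv_edges_iff:
  "{a, b} \<in> subdiv_edges E \<longleftrightarrow>
     (\<exists>v e. e \<in> E \<and> v \<in> e \<and> (a = Inl v \<and> b = Inr e \<or> a = Inr e \<and> b = Inl v))"
  unfolding subdiv_edges_def by (auto simp: doubleton_eq_iff)

lemma subdiv_edges_singleton [simp]: "{a} \<notin> subdiv_edges E"
  unfolding subdiv_edges_def by (auto simp: doubleton_eq_iff)

lemma S_sum_edge_within_copy:
  "{(Inl v, a), (Inl v, b)} \<in> S_sum_edges VG EG VH EH \<Longrightarrow> {a, b} \<in> EH"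
  by (auto simp: S_sum_edges_iff S_sum_adj_def subdiv_edges_iff)

lemma S_sum_no_edge_between_copies:
  "v \<noteq> w \<Longrightarrow> {(Inl v, a), (Inl w, b)} \<notin> S_sum_edges VG EG VH EH"
  by (auto simp: S_sum_edges_iff S_sum_adj_def subdiv_edges_iff)

lemma S_sum_deg_in_edge_vertex_le_2:
  assumes "simple_graph VG EG" and "e \<in> EG"
  shows "deg_in (S_sum_edges VG EG VH EH) W (Inr e, h) \<le> 2"
proof -
  let ?endpoint = "\<lambda>v. (Inl v :: 'a + 'a set, h)"
  obtain a b where e: "e = {a, b}" using assms by (auto simp: simple_graph_def)
  have "{u \<in> W. {u, (Inr e, h)} \<in> S_sum_edges VG EG VH EH} \<subseteq> ?endpoint ` e"
    by (auto simp: S_sum_edges_iff S_sum_adj_def subdiv_edges_iff)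
  then have "deg_in (S_sum_edges VG EG VH EH) W (Inr e, h) \<le> card (?endpoint ` e)"
    unfolding deg_in_def using e by (intro card_mono) auto
  also have "\<dots> \<le> card e" using e by (intro card_image_le) auto
  also have "\<dots> \<le> 2" using e by (simp add: card_insert_le_m1)
  finally show ?thesis .
qed

lemma S_sum_degenerate:
  assumes "simple_graph VG EG" and "degenerate VH EH l"
  shows "degenerate (S_sum_vertices VG EG VH) (S_sum_edges VG EG VH EH) (max 2 l)"
proof -
  let ?E = "S_sum_edges VG EG VH EH"
  obtain hs where hs: "distinct hs" "set hs = VH" "degeneracy_order EH l hs"
    using assms(2) by (auto simp: degenerate_iff_degeneracy_order)
  have "finite VG" using assms(1) by (simp add: simple_graph_def)
  moreover have "EG \<subseteq> Pow VG" using assms(1) by (auto simp: simple_graph_def)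
  ultimately have "finite EG" by (meson finite_Pow_iff finite_subset)
  obtain vs where vs: "distinct vs" "set vs = VG" using \<open>finite VG\<close> finite_distinct_list by blast
  obtain es where es: "distinct es" "set es = EG" using \<open>finite EG\<close> finite_distinct_list by blast
  define copies :: "('a + 'a set) list" where "copies = map Inl vs"
  define subdivisions :: "('a + 'a set) list" where "subdivisions = map Inr es"
  define edge_part where "edge_part = List.product subdivisions hs"
  define copy_part where "copy_part = List.product copies hs"
  have edge_part_low: "\<forall>x\<in>set edge_part. \<forall>W. deg_in ?E W x \<le> max 2 l"
  proof (intro ballI allI)
    fix x W assume "x \<in> set edge_part"
    then obtain e h where "x = (Inr e, h)" "e \<in> EG"
      using es by (auto simp: edge_part_def subdivisions_def)
    then show "deg_in ?E W x \<le> max 2 l"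
      using S_sum_deg_in_edge_vertex_le_2[OF assms(1)] by (metis le_trans max.cobounded1)
  qed
  have "degeneracy_order ?E l copy_part"
    unfolding copy_part_def product_concat_map
  proof (rule degeneracy_order_concat_nonadjacent)
    show "distinct copies" using vs(1) by (simp add: copies_def distinct_map)
    show "\<forall>w\<in>set copies. degeneracy_order ?E l (map (Pair w) hs)"
    proof
      fix w assume "w \<in> set copies"
      then obtain v where "w = Inl v" by (auto simp: copies_def)
      show "degeneracy_order ?E l (map (Pair w) hs)"
        unfolding \<open>w = Inl v\<close>
        by (rule degeneracy_order_map[OF hs(3)]) (rule S_sum_edge_within_copy)
    qed
    show "\<forall>w\<in>set copies. \<forall>w'\<in>set copies. w \<noteq> w' \<longrightarrow>
        (\<forall>x\<in>set (map (Pair w) hs). \<forall>y\<in>set (map (Pair w') hs). {y, x} \<notin> ?E)"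
      by (auto simp: copies_def insert_commute S_sum_no_edge_between_copies)
  qed
  then have "degeneracy_order ?E (max 2 l) (edge_part @ copy_part)"
    using edge_part_low degeneracy_order_append_low_degree degeneracy_order_mono by fastforce
  moreover have "distinct (edge_part @ copy_part)"
    using es vs hs
    by (auto simp: edge_part_def copy_part_def subdivisions_def copies_def distinct_product distinct_map)
  moreover have "set (edge_part @ copy_part) = S_sum_vertices VG EG VH"
    using es vs hs
    by (auto simp: edge_part_def copy_part_def subdivisions_def copies_def
        S_sum_vertices_def subdiv_vertices_def)
  ultimately show ?thesis unfolding degenerate_iff_degeneracy_order by blast
qed

theorem theorem1:
  fixes VG :: "'a set" and EG :: "'a set set" and VH :: "'b set" and EH :: "'b set set"
    and l :: nat
  assumes "l \<ge> 1"
    and "simple_graph VG EG"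
    and "simple_graph VH EH"
    and "degenerate VH EH l"
  shows "(l \<in> {1, 2} \<longrightarrow> degenerate (S_sum_vertices VG EG VH) (S_sum_edges VG EG VH EH) 2)
       \<and> (l \<ge> 3 \<longrightarrow> degenerate (S_sum_vertices VG EG VH) (S_sum_edges VG EG VH EH) l)"
  using S_sum_degenerate[OF assms(2,4)] by (auto simp: max_def)

end
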